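(* Let $X\subset\mathbb{R}^n$ be bounded, let $X_I, X_G\subset X$ with $X_G$ compact, and let $\partial X_G$ denote the boundary of $X_G$. Let $f\colon X\to\mathbb{R}^n$ define the dynamics $x(k+1)=f(x(k))$ (assumed to have unique solutions). Fix $T\in\mathbb{N}_+$ and let $\Xi$ be the set of all trajectories $\xi=\{x(k)\}_{k=0}^T$ consistent with these dynamics and with $x(0)\in X_I$. Let $V\colon\mathbb{R}^n\to\mathbb{R}$ be continuous and fix $\delta$ with $\delta>-\inf_{x\in X_I}V(x)\geq 0$. Suppose that (i) $V(x)\le 0$ for all $x\in X_I$; (ii) $V(x)\ge-\delta$ for all $x\in\partial X_G$; (iii) $V(x)>-\delta$ for all $x\in X\setminus X_G$; (iv) $V(x)>0$ for all $x\in\mathbb{R}^n\setminus X$; (v) for every trajectory $\xi=\{x(k)\}_{k=0}^T\in\Xi$, $$V(x(k+1))-V(x(k))<-\frac1T\Big(\sup_{x\in X_I}V(x)+\delta\Big),\qquad k=0,\dots,k_G-1,$$ where $k_G:=\min\{k\in\{0,\dots,T\}: V(x(k))\le-\delta\}$, or $k_G=T$ if no such $k$ exists. Then $V$ is a reachability certificate: for every $\xi\in\Xi$ there exists $k\in\{0,\dots,T\}$ with $x(k)\in X_G$.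
   Context: Trajectories are finite sequences of states generated by the deterministic discrete-time dynamics from an initial state in $X_I$. *)

theory Defs
  imports "HOL-Analysis.Analysis"
begin

text \<open>Trajectories of horizon T of x(k+1) = f(x(k)) with x(0) in X_I.
  Since f is only defined on X, each state at which f is applied (k < T)
  must lie in X.\<close>
definition trajectories ::
  "'a set \<Rightarrow> 'a set \<Rightarrow> ('a \<Rightarrow> 'a) \<Rightarrow> nat \<Rightarrow> (nat \<Rightarrow> 'a) set" where
  "trajectories X X_I f T =
     {\<xi>. \<xi> 0 \<in> X_I \<and> (\<forall>k<T. \<xi> k \<in> X \<and> \<xi> (Suc k) = f (\<xi> k))}"

definition kG :: "('a \<Rightarrow> real) \<Rightarrow> real \<Rightarrow> nat \<Rightarrow> (nat \<Rightarrow> 'a) \<Rightarrow> nat" where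
  "kG V \<delta> T \<xi> =
     (if \<exists>k\<le>T. V (\<xi> k) \<le> - \<delta> then (LEAST k. k \<le> T \<and> V (\<xi> k) \<le> - \<delta>) else T)"

end

theory Submission
  imports Defs
begin

text \<open>If a trajectory avoided \<open>X_G\<close>, conditions (iii) and (iv) would keep \<open>V\<close> above \<open>-\<delta>\<close>
  along it, so \<open>k_G = T\<close> and the decrease condition (v) holds at all \<open>T\<close> steps. Summing
  the \<open>T\<close> decrements from \<open>V(x(0)) \<le> sup V(X_I)\<close> then forces \<open>V(x(T)) \<le> -\<delta>\<close>, a
  contradiction.\<close>

lemma gt_neg_level_outside_goal:
  fixes V :: "'a \<Rightarrow> real"
  assumes "\<delta> > 0"
    and "\<forall>x\<in>X - X_G. V x > - \<delta>" and "\<forall>x\<in>UNIV - X. V x > 0"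
    and "x \<notin> X_G"
  shows "V x > - \<delta>"
proof (cases "x \<in> X")
  case True
  then show ?thesis using assms(2,4) by blast
next
  case False
  then have "V x > 0" using assms(3) by blast
  then show ?thesis using assms(1) by linarith
qed

lemma kG_eq_horizon:
  assumes "\<forall>k\<le>T. V (\<xi> k) > - \<delta>"
  shows "kG V \<delta> T \<xi> = T"
proof -
  have "\<not> (\<exists>k\<le>T. V (\<xi> k) \<le> - \<delta>)" using assms by (auto simp: not_le)
  then show ?thesis unfolding kG_def by (rule if_not_P)
qed

lemma decrements_sum_bound:
  fixes g :: "nat \<Rightarrow> real"
  assumes "\<forall>k<m. g (Suc k) - g k < - c"
  shows "g m \<le> g 0 - real m * c"
  using assms
proof (induction m)
  case (Suc m)
  then have "g m \<le> g 0 - real m * c" and "g (Suc m) - g m < - c" by simp_all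
  then show ?case by (simp add: algebra_simps)
qed simp

lemma le_Sup_image_if_nonpos:
  fixes V :: "'a \<Rightarrow> real"
  assumes "\<forall>x\<in>A. V x \<le> 0" and "x \<in> A"
  shows "V x \<le> Sup (V ` A)"
proof -
  have "bdd_above (V ` A)" using assms(1) by (auto intro: bdd_aboveI[where M = 0])
  then show ?thesis using assms(2) by (simp add: cSUP_upper)
qed

theorem proposition1:
  fixes X X_I X_G :: "(real ^ 'n) set"
    and f :: "real ^ 'n \<Rightarrow> real ^ 'n"
    and V :: "real ^ 'n \<Rightarrow> real"
    and T :: nat and \<delta> :: real
  assumes "bounded X"
    and "X_I \<subseteq> X" and "X_G \<subseteq> X" and "compact X_G"
    and "T \<ge> 1"
    and "continuous_on UNIV V"
    and "- Inf (V ` X_I) \<ge> 0" and "\<delta> > - Inf (V ` X_I)"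
    and "\<forall>x\<in>X_I. V x \<le> 0"
    and "\<forall>x\<in>frontier X_G. V x \<ge> - \<delta>"
    and "\<forall>x\<in>X - X_G. V x > - \<delta>"
    and "\<forall>x\<in>UNIV - X. V x > 0"
    and "\<forall>\<xi>\<in>trajectories X X_I f T. \<forall>k<kG V \<delta> T \<xi>.
           V (\<xi> (Suc k)) - V (\<xi> k) < - (1 / real T) * (Sup (V ` X_I) + \<delta>)"
  shows "\<forall>\<xi>\<in>trajectories X X_I f T. \<exists>k\<le>T. \<xi> k \<in> X_G"
proof (intro ballI, rule ccontr)
  fix \<xi> assume \<xi>: "\<xi> \<in> trajectories X X_I f T" and avoids: "\<not> (\<exists>k\<le>T. \<xi> k \<in> X_G)"
  define c where "c = (1 / real T) * (Sup (V ` X_I) + \<delta>)"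
  have "\<delta> > 0" using assms(7,8) by linarith
  have above: "\<forall>k\<le>T. V (\<xi> k) > - \<delta>"
    using avoids gt_neg_level_outside_goal[OF \<open>\<delta> > 0\<close> assms(11,12)] by blast
  then have "kG V \<delta> T \<xi> = T" by (rule kG_eq_horizon)
  then have "\<forall>k<T. V (\<xi> (Suc k)) - V (\<xi> k) < - c"
    using bspec[OF assms(13) \<xi>] unfolding c_def by simp
  then have "V (\<xi> T) \<le> V (\<xi> 0) - real T * c"
    by (rule decrements_sum_bound)
  moreover have "V (\<xi> 0) \<le> Sup (V ` X_I)"
    using \<xi> le_Sup_image_if_nonpos[OF assms(9)] unfolding trajectories_def by blast
  moreover have "real T * c = Sup (V ` X_I) + \<delta>" using assms(5) unfolding c_def by simp
  moreover have "V (\<xi> T) > - \<delta>" using above by blast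
  ultimately show False by linarith
qed

end
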